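(* Let $\mathbb{S}^2\subset\mathbb{R}^3$ be the unit sphere with its induced Euclidean metric, let $N=(0,0,1)$ and $S=(0,0,-1)$, and let $M=\mathbb{S}^2\setminus\{N,S\}$. Let $\vec v$ be a smooth unit vector field defined on $M$. If $k=\max\{I_{\vec v}(N),I_{\vec v}(S)\}$, then \[ \mathrm{vol}(\vec v)\ \ge\ \pi\, L(\varepsilon_k), \] where $L(\varepsilon_k)$ is the length of the ellipse $\varepsilon_k:\ \frac{x^2}{k^2}+\frac{y^2}{(k-2)^2}=1$, with $k>2$.
   Context: $I_{\vec v}(P)$ denotes the Poincaré index of $\vec v$ around the isolated singular point $P\in\{N,S\}$. The volume $\mathrm{vol}(\vec v)$ of the unit vector field is the area of the surface $\vec v(M)$ in the unit tangent bundle $T^1\mathbb{S}^2$ equipped with the Sasaki metric; equivalently, if $g$ is the round metric, $\nabla$ its Levi-Civita connection, $\nu$ the area form, and $\vec v^{\perp}$ is the unit vector field such that $\{\vec v^{\perp},\vec v\}$ is a positively oriented orthonormal frame, then \[ \mathrm{vol}(\vec v)=\int_M\sqrt{1+\gamma^2+\delta^2}\,\nu,\qquad \gamma=g(\nabla_{\vec v}\vec v,\vec v^{\perp}),\quad \delta=g(\nabla_{\vec v^{\perp}}\vec v^{\perp},\vec v). \] *)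

theory Defs
  imports "HOL-Analysis.Analysis" "HOL-Complex_Analysis.Complex_Analysis"
begin

primrec Ck_on :: "nat \<Rightarrow> 'a::euclidean_space set \<Rightarrow> ('a \<Rightarrow> 'b::real_normed_vector) \<Rightarrow> bool" where
  "Ck_on 0 U f = continuous_on U f"
| "Ck_on (Suc n) U f =
     ((\<forall>x\<in>U. f differentiable (at x)) \<and>
      (\<forall>i\<in>Basis. Ck_on n U (\<lambda>x. frechet_derivative f (at x) i)))"

definition smooth_on :: "'a::euclidean_space set \<Rightarrow> ('a \<Rightarrow> 'b::real_normed_vector) \<Rightarrow> bool" where
  "smooth_on U f \<longleftrightarrow> open U \<and> (\<forall>n. Ck_on n U f)"

definition sphere2 :: "(real^3) set" where
  "sphere2 = {p. norm p = 1}"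

definition northP :: "real^3" where "northP = vector [0, 0, 1]"
definition southP :: "real^3" where "southP = vector [0, 0, -1]"

definition Mset :: "(real^3) set" where
  "Mset = sphere2 - {northP, southP}"

definition smooth_unit_vf :: "(real^3 \<Rightarrow> real^3) \<Rightarrow> bool" where
  "smooth_unit_vf v \<longleftrightarrow>
     (\<exists>U. Mset \<subseteq> U \<and> smooth_on U v) \<and>
     (\<forall>p\<in>Mset. norm (v p) = 1 \<and> v p \<bullet> p = 0)"

text \<open>Chart around a pole: (x,y) \<mapsto> (x, y, s sqrt(1-x^2-y^2)), s = 1 at N, s = -1 at S.
  In the coordinate frame of this chart the components of a tangent vector w are
  (w$1, w$2). The index is the winding number around 0 of these components along
  a small positively oriented circle of radius r about the pole in the chart.\<close>
definition pole_loop :: "real \<Rightarrow> real \<Rightarrow> real \<Rightarrow> real^3" where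
  "pole_loop s r t = vector [r * cos (2*pi*t), r * sin (2*pi*t), s * sqrt (1 - r\<^sup>2)]"

definition poincare_index :: "(real^3 \<Rightarrow> real^3) \<Rightarrow> real^3 \<Rightarrow> int" where
  "poincare_index v P =
     (THE w::int. \<exists>e>0. \<forall>r. 0 < r \<and> r < e \<longrightarrow>
        winding_number (\<lambda>t. Complex (v (pole_loop (P$3) r t) $ 1) (v (pole_loop (P$3) r t) $ 2)) 0
          = of_int w)"

text \<open>Ambient derivative of v at p in direction w; for tangent w at p \<in> M this only
  depends on v restricted to M. Since the vectors paired below are tangent, the
  Levi-Civita connection of the round metric gives the same inner products.\<close>
definition Dv :: "(real^3 \<Rightarrow> real^3) \<Rightarrow> real^3 \<Rightarrow> real^3 \<Rightarrow> real^3" where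
  "Dv v p w = frechet_derivative v (at p) w"

text \<open>v_perp: {v_perp, v} positively oriented orthonormal (outward normal p), i.e. v_perp \<times> v = p.\<close>
definition vperp :: "(real^3 \<Rightarrow> real^3) \<Rightarrow> real^3 \<Rightarrow> real^3" where
  "vperp v p = cross3 (v p) p"

definition gamma_vf :: "(real^3 \<Rightarrow> real^3) \<Rightarrow> real^3 \<Rightarrow> real" where
  "gamma_vf v p = Dv v p (v p) \<bullet> vperp v p"

definition delta_vf :: "(real^3 \<Rightarrow> real^3) \<Rightarrow> real^3 \<Rightarrow> real" where
  "delta_vf v p = Dv (vperp v) p (vperp v p) \<bullet> v p"

definition sph :: "real \<times> real \<Rightarrow> real^3" where
  "sph x = vector [sin (fst x) * cos (snd x), sin (fst x) * sin (snd x), cos (fst x)]"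

definition sphere_nn_integral :: "(real^3 \<Rightarrow> real) \<Rightarrow> ennreal" where
  "sphere_nn_integral f =
     (\<integral>\<^sup>+ x. indicator ({0<..<pi} \<times> {0<..<2*pi}) x * ennreal (f (sph x) * sin (fst x)) \<partial>lborel)"

definition vol_vf :: "(real^3 \<Rightarrow> real^3) \<Rightarrow> ennreal" where
  "vol_vf v = sphere_nn_integral (\<lambda>p. sqrt (1 + (gamma_vf v p)\<^sup>2 + (delta_vf v p)\<^sup>2))"

definition ellipse_length :: "real \<Rightarrow> real \<Rightarrow> real" where
  "ellipse_length a b = integral {0..2*pi} (\<lambda>t. sqrt ((a * sin t)\<^sup>2 + (b * cos t)\<^sup>2))"

end

theory Submission
  imports Defs
begin

text \<open>Write \<open>v = A e\<^sub>\<theta> + B e\<^sub>\<phi>\<close> in the spherical frame. Along each parallel the loop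
  \<open>A + iB\<close> has a winding number \<open>m\<close> that does not depend on the latitude, and in the pole
  charts \<open>v\<close> reads \<open>e\<^sup>i\<^sup>\<phi> (A cos \<theta> + iB)\<close>, so the indices at \<open>N\<close> and \<open>S\<close> are \<open>1 + m\<close>
  and \<open>1 - m\<close>; hence \<open>k = 1 + |m|\<close>. Expanding \<open>e\<^sub>\<phi>\<close> in the frame \<open>{v, v\<^sup>\<bottom>}\<close> and
  applying Cauchy-Schwarz bounds the rotation speed \<open>\<omega> = - \<partial>\<^sub>\<phi>v \<bullet> v\<^sup>\<bottom>\<close> by
  \<open>\<omega>\<^sup>2 \<le> sin\<^sup>2\<theta> (\<gamma>\<^sup>2 + \<delta>\<^sup>2)\<close>, so the volume density dominates \<open>sqrt (sin\<^sup>2\<theta> + \<omega>\<^sup>2)\<close>.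
  The mean of \<open>\<omega>\<close> over a parallel is \<open>m + cos \<theta>\<close>, and Jensen's inequality on each parallel
  gives \<open>vol v \<ge> \<integral>\<^sub>0\<^sup>\<pi> 2\<pi> sqrt (sin\<^sup>2\<theta> + (m + cos \<theta>)\<^sup>2) d\<theta>\<close>, which is \<open>\<pi> L(\<epsilon>\<^sub>k)\<close>.\<close>

section \<open>The spherical frame\<close>

definition e_theta :: "real \<Rightarrow> real \<Rightarrow> real^3" where
  "e_theta th ph = vector [cos th * cos ph, cos th * sin ph, - sin th]"

definition e_phi :: "real \<Rightarrow> real^3" where
  "e_phi ph = vector [- sin ph, cos ph, 0]"

lemma inner_vec3: "(x::real^3) \<bullet> y = x$1 * y$1 + x$2 * y$2 + x$3 * y$3"
  by (simp add: inner_vec_def sum_3)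

lemma vector3_eq_axis:
  "(vector [a, b, c] :: real^3) = a *\<^sub>R axis 1 1 + b *\<^sub>R axis 2 1 + c *\<^sub>R axis 3 1"
  unfolding vec_eq_iff forall_3 by (simp add: axis_def)

lemma sph_frame_orthonormal:
  "e_theta th ph \<bullet> e_theta th ph = 1" "e_phi ph \<bullet> e_phi ph = 1" "sph (th,ph) \<bullet> sph (th,ph) = 1"
  "e_theta th ph \<bullet> e_phi ph = 0" "e_theta th ph \<bullet> sph (th,ph) = 0" "e_phi ph \<bullet> sph (th,ph) = 0"
proof -
  have "sin th ^ 2 + cos th ^ 2 = 1" "sin ph ^ 2 + cos ph ^ 2 = 1" by simp_all
  then show "e_theta th ph \<bullet> e_theta th ph = 1" "e_phi ph \<bullet> e_phi ph = 1"
    "sph (th,ph) \<bullet> sph (th,ph) = 1" "e_theta th ph \<bullet> e_phi ph = 0"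
    "e_theta th ph \<bullet> sph (th,ph) = 0" "e_phi ph \<bullet> sph (th,ph) = 0"
    unfolding inner_vec3 e_theta_def e_phi_def sph_def by (simp; algebra)+
qed

lemma norm_sph: "norm (sph x) = 1"
  using sph_frame_orthonormal(3)[of "fst x" "snd x"] by (simp add: norm_eq_1)

lemma tangent_sph_frame_expansion:
  assumes "w \<bullet> sph (th,ph) = 0"
  shows "w = (w \<bullet> e_theta th ph) *\<^sub>R e_theta th ph + (w \<bullet> e_phi ph) *\<^sub>R e_phi ph"
proof -
  have "sin th ^ 2 + cos th ^ 2 = 1" "sin ph ^ 2 + cos ph ^ 2 = 1" by simp_all
  then have "w = (w \<bullet> e_theta th ph) *\<^sub>R e_theta th ph + (w \<bullet> e_phi ph) *\<^sub>R e_phi ph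
      + (w \<bullet> sph (th,ph)) *\<^sub>R sph (th,ph)"
    unfolding vec_eq_iff forall_3 inner_vec3 e_theta_def e_phi_def sph_def
    by (simp; intro conjI; algebra)
  with assms show ?thesis by simp
qed

lemma cross3_sph_frame:
  "cross3 (a *\<^sub>R e_theta th ph + b *\<^sub>R e_phi ph) (sph (th,ph)) = b *\<^sub>R e_theta th ph - a *\<^sub>R e_phi ph"
proof -
  have "sin th ^ 2 + cos th ^ 2 = 1" "sin ph ^ 2 + cos ph ^ 2 = 1" by simp_all
  then show ?thesis
    unfolding vec_eq_iff forall_3 cross3_def e_theta_def e_phi_def sph_def
    by (simp; intro conjI; algebra)
qed

lemma sph_in_Mset:
  assumes "0 < th" "th < pi"
  shows "sph (th,ph) \<in> Mset"
proof -
  have "sin th > 0" using assms sin_gt_zero by blast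
  moreover have "sin ph \<noteq> 0 \<or> cos ph \<noteq> 0"
    using sin_cos_squared_add[of ph] by (metis power_zero_numeral add_0 zero_neq_one)
  ultimately have "sph (th,ph) \<noteq> northP" "sph (th,ph) \<noteq> southP"
    by (auto simp: northP_def southP_def sph_def vec_eq_iff forall_3)
  then show ?thesis using norm_sph[of "(th,ph)"] by (simp add: Mset_def sphere2_def)
qed

lemma pole_loop_northP:
  assumes "0 < r" "r < 1"
  shows "pole_loop (northP $ 3) r t = sph (arcsin r, 2*pi*t)"
  using assms cos_arcsin[of r] by (simp add: pole_loop_def sph_def northP_def)

lemma pole_loop_southP:
  assumes "0 < r" "r < 1"
  shows "pole_loop (southP $ 3) r t = sph (pi - arcsin r, 2*pi*t)"
  using assms cos_arcsin[of r] by (simp add: pole_loop_def sph_def southP_def)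

lemma has_vector_derivative_sph_phi:
  "((\<lambda>ph. sph (th,ph)) has_vector_derivative sin th *\<^sub>R e_phi ph) (at ph)"
  unfolding sph_def e_phi_def vector3_eq_axis
  by (auto intro!: derivative_eq_intros simp: algebra_simps)

lemma has_vector_derivative_e_theta_phi:
  "((\<lambda>ph. e_theta th ph) has_vector_derivative cos th *\<^sub>R e_phi ph) (at ph)"
  unfolding e_theta_def e_phi_def vector3_eq_axis
  by (auto intro!: derivative_eq_intros simp: algebra_simps)

lemma has_vector_derivative_e_phi:
  "(e_phi has_vector_derivative - (sin th *\<^sub>R sph (th,ph) + cos th *\<^sub>R e_theta th ph)) (at ph)"
proof -
  have "sin th *\<^sub>R sph (th,ph) + cos th *\<^sub>R e_theta th ph = vector [cos ph, sin ph, 0]"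
    using sin_cos_squared_add[of th]
    unfolding vec_eq_iff forall_3 sph_def e_theta_def by (simp; intro conjI; algebra)
  then show ?thesis
    unfolding e_phi_def[abs_def] vector3_eq_axis
    by (auto intro!: derivative_eq_intros simp: algebra_simps)
qed

lemma continuous_on_sph: "continuous_on (X :: (real \<times> real) set) sph"
  unfolding sph_def[abs_def] vector3_eq_axis by (intro continuous_intros)

lemma continuous_on_e_theta: "continuous_on (X :: (real \<times> real) set) (\<lambda>x. e_theta (fst x) (snd x))"
  unfolding e_theta_def vector3_eq_axis by (intro continuous_intros)

lemma continuous_on_e_phi: "continuous_on (X :: (real \<times> real) set) (\<lambda>x. e_phi (snd x))"
  unfolding e_phi_def vector3_eq_axis by (intro continuous_intros)

section \<open>A pointwise bound for the curvature terms\<close>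

lemma tangent_cross3_expansion:
  fixes u p w :: "real^3"
  assumes "u \<bullet> u = 1" "p \<bullet> p = 1" "u \<bullet> p = 0" "w \<bullet> p = 0"
  shows "w = (w \<bullet> u) *\<^sub>R u + (w \<bullet> cross3 u p) *\<^sub>R cross3 u p"
  using assms unfolding vec_eq_iff forall_3 cross3_def inner_vec3
  by (simp; intro conjI; algebra)

lemma has_derivative_vperp:
  assumes "v differentiable (at p)"
  shows "(vperp v has_derivative (\<lambda>h. cross3 (v p) h + cross3 (Dv v p h) p)) (at p)"
proof -
  have "bounded_bilinear cross3"
    using bilinear_conv_bounded_bilinear bilinear_cross by blast
  moreover have "(v has_derivative Dv v p) (at p)"
    using assms frechet_derivative_works unfolding Dv_def[abs_def] by blast
  ultimately show ?thesis
    unfolding vperp_def[abs_def] by (rule bounded_bilinear.FDERIV[OF _ _ has_derivative_ident])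
qed

lemma inner_cross3_swap: "cross3 x p \<bullet> w = - (x \<bullet> cross3 w p)"
  by (simp add: cross3_simps)

lemma delta_vf_eq:
  assumes "v differentiable (at p)"
  shows "delta_vf v p = - (Dv v p (vperp v p) \<bullet> vperp v p)"
proof -
  have "Dv (vperp v) p h = cross3 (v p) h + cross3 (Dv v p h) p" for h
    using frechet_derivative_at[OF has_derivative_vperp[OF assms], symmetric] by (simp add: Dv_def)
  then show ?thesis
    unfolding delta_vf_def by (simp add: inner_add_left dot_cross_self inner_cross3_swap vperp_def)
qed

lemma inner_Dv_vperp_le:
  assumes "v differentiable (at p)" "norm p = 1" "norm (v p) = 1" "v p \<bullet> p = 0"
    and "norm w = 1" "w \<bullet> p = 0"
  shows "(Dv v p w \<bullet> vperp v p)\<^sup>2 \<le> (gamma_vf v p)\<^sup>2 + (delta_vf v p)\<^sup>2"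
proof -
  define u where "u = vperp v p"
  define a b where "a = w \<bullet> v p" and "b = w \<bullet> u"
  have vv: "v p \<bullet> v p = 1" and pp: "p \<bullet> p = 1" and ww: "w \<bullet> w = 1"
    using assms by (simp_all add: norm_eq_1)
  have w: "w = a *\<^sub>R v p + b *\<^sub>R u"
    unfolding a_def b_def u_def vperp_def by (rule tangent_cross3_expansion[OF vv pp assms(4,6)])
  have uu: "u \<bullet> u = 1"
    using norm_cross_dot[of "v p" p] assms(2-4) by (simp add: u_def vperp_def power2_norm_eq_inner)
  have vu: "v p \<bullet> u = 0" "u \<bullet> v p = 0"
    by (simp_all add: u_def vperp_def dot_cross_self)
  have ab: "a\<^sup>2 + b\<^sup>2 = 1"
    using ww unfolding w
    by (simp add: inner_add_left inner_add_right vv uu vu power2_eq_square)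
  have lin: "linear (Dv v p)"
    using assms(1) linear_frechet_derivative unfolding Dv_def[abs_def] by blast
  have "Dv v p w \<bullet> u = a * gamma_vf v p - b * delta_vf v p"
    unfolding w gamma_vf_def delta_vf_eq[OF assms(1)] u_def
    by (simp add: linear_add[OF lin] linear_scale[OF lin] inner_add_left)
  moreover have "(a * gamma_vf v p - b * delta_vf v p)\<^sup>2
      \<le> (a\<^sup>2 + b\<^sup>2) * ((gamma_vf v p)\<^sup>2 + (delta_vf v p)\<^sup>2)"
    using sum_squares_ge_zero[of "a * delta_vf v p + b * gamma_vf v p" 0]
    by (simp add: power2_eq_square algebra_simps)
  ultimately show ?thesis using ab by (simp add: u_def)
qed

section \<open>Winding numbers of continuously differentiable loops\<close>

lemma winding_number_eq_integral_logderiv: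
  fixes g g' :: "real \<Rightarrow> complex"
  assumes der: "\<And>t. (g has_vector_derivative g' t) (at t)"
    and cont: "continuous_on {0..1} g'"
    and nz: "\<And>t. t \<in> {0..1} \<Longrightarrow> g t \<noteq> 0"
  shows "winding_number g 0 = integral {0..1} (\<lambda>t. g' t / g t) / (2*pi*\<i>)"
proof -
  have "g C1_differentiable_on {0..1}"
    unfolding C1_differentiable_on_def using der cont by blast
  then have "valid_path g"
    unfolding valid_path_def by (rule C1_differentiable_imp_piecewise)
  moreover have "0 \<notin> path_image g"
    using nz by (auto simp: path_image_def)
  ultimately have "winding_number g 0 = 1/(2*pi*\<i>) * contour_integral g (\<lambda>w. 1/(w - 0))"
    by (rule winding_number_valid_path)
  also have "contour_integral g (\<lambda>w. 1/(w - 0)) = integral {0..1} (\<lambda>t. g' t / g t)"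
    unfolding contour_integral_integral
    by (rule integral_cong) (simp add: vector_derivative_at[OF der])
  finally show ?thesis by simp
qed

lemma winding_number_cis_mult:
  fixes g g' :: "real \<Rightarrow> complex"
  assumes der: "\<And>t. (g has_vector_derivative g' t) (at t)"
    and cont: "continuous_on {0..1} g'"
    and nz: "\<And>t. t \<in> {0..1} \<Longrightarrow> g t \<noteq> 0"
  shows "winding_number (\<lambda>t. cis (2*pi*t) * g t) 0 = 1 + winding_number g 0"
proof -
  have cis_der: "((\<lambda>t. cis (2*pi*t)) has_vector_derivative (2*pi*\<i>) * cis (2*pi*t)) (at t)" for t
    unfolding has_vector_derivative_def
    by (auto intro!: derivative_eq_intros simp: algebra_simps scaleR_conv_of_real)
  have g_cont: "continuous_on {0..1} g"
    using der by (meson continuous_at_imp_continuous_on has_vector_derivative_continuous)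
  have "winding_number (\<lambda>t. cis (2*pi*t) * g t) 0 = integral {0..1}
      (\<lambda>t. (cis (2*pi*t) * g' t + (2*pi*\<i>) * cis (2*pi*t) * g t) / (cis (2*pi*t) * g t)) / (2*pi*\<i>)"
  proof (rule winding_number_eq_integral_logderiv)
    show "((\<lambda>t. cis (2*pi*t) * g t) has_vector_derivative
        cis (2*pi*t) * g' t + (2*pi*\<i>) * cis (2*pi*t) * g t) (at t)" for t
      by (rule has_vector_derivative_mult[OF cis_der der])
  qed (use nz in \<open>auto intro!: continuous_intros cont g_cont\<close>)
  also have "integral {0..1} (\<lambda>t. (cis (2*pi*t) * g' t + (2*pi*\<i>) * cis (2*pi*t) * g t)
      / (cis (2*pi*t) * g t)) = integral {0..1} (\<lambda>t. (2*pi*\<i>) + g' t / g t)"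
    by (rule integral_cong) (use nz in \<open>auto simp: field_simps\<close>)
  also have "\<dots> = (2*pi*\<i>) + integral {0..1} (\<lambda>t. g' t / g t)"
    by (subst integral_add)
      (use nz in \<open>auto intro!: integrable_continuous_interval continuous_intros cont g_cont\<close>)
  finally show ?thesis
    using winding_number_eq_integral_logderiv[OF der cont nz] by (simp add: add_divide_distrib)
qed

lemma winding_number_neg_cnj:
  fixes g g' :: "real \<Rightarrow> complex"
  assumes der: "\<And>t. (g has_vector_derivative g' t) (at t)"
    and cont: "continuous_on {0..1} g'"
    and nz: "\<And>t. t \<in> {0..1} \<Longrightarrow> g t \<noteq> 0"
  shows "winding_number (\<lambda>t. - cnj (g t)) 0 = - cnj (winding_number g 0)"
proof -
  have "winding_number (\<lambda>t. - cnj (g t)) 0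
      = integral {0..1} (\<lambda>t. - cnj (g' t) / - cnj (g t)) / (2*pi*\<i>)"
    by (rule winding_number_eq_integral_logderiv)
      (use nz in \<open>auto intro!: derivative_intros der continuous_intros cont\<close>)
  also have "integral {0..1} (\<lambda>t. - cnj (g' t) / - cnj (g t)) = cnj (integral {0..1} (\<lambda>t. g' t / g t))"
    by (simp add: integral_cnj)
  finally show ?thesis
    using winding_number_eq_integral_logderiv[OF der cont nz] by simp
qed

lemma winding_number_mult_stretch_Re:
  fixes p g :: "real \<Rightarrow> complex"
  assumes "path p" "path g" "pathfinish p = pathstart p" "pathfinish g = pathstart g"
    and "\<And>t. t \<in> {0..1} \<Longrightarrow> p t \<noteq> 0" "\<And>t. t \<in> {0..1} \<Longrightarrow> g t \<noteq> 0" and "c > 0"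
  shows "winding_number (\<lambda>t. p t * Complex (c * Re (g t)) (Im (g t))) 0
       = winding_number (\<lambda>t. p t * g t) 0"
proof (rule winding_number_loops_linear_eq)
  show "path (\<lambda>t. p t * g t)" "path (\<lambda>t. p t * Complex (c * Re (g t)) (Im (g t)))"
    using assms(1,2) unfolding path_def Complex_eq by (auto intro!: continuous_intros)
  show "pathfinish (\<lambda>t. p t * g t) = pathstart (\<lambda>t. p t * g t)"
    "pathfinish (\<lambda>t. p t * Complex (c * Re (g t)) (Im (g t)))
      = pathstart (\<lambda>t. p t * Complex (c * Re (g t)) (Im (g t)))"
    using assms(3,4) by (simp_all add: pathfinish_def pathstart_def)
next
  fix t :: real
  assume t: "t \<in> {0..1}"
  show "0 \<notin> closed_segment (p t * g t) (p t * Complex (c * Re (g t)) (Im (g t)))"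
  proof
    assume "0 \<in> closed_segment (p t * g t) (p t * Complex (c * Re (g t)) (Im (g t)))"
    then obtain u :: real where u: "0 \<le> u" "u \<le> 1"
      and "0 = (1 - u) *\<^sub>R (p t * g t) + u *\<^sub>R (p t * Complex (c * Re (g t)) (Im (g t)))"
      by (auto simp: closed_segment_def)
    then have "p t * Complex ((1 - u + u * c) * Re (g t)) (Im (g t)) = 0"
      by (simp add: complex_eq_iff algebra_simps)
    then have "Complex ((1 - u + u * c) * Re (g t)) (Im (g t)) = 0"
      using assms(5)[OF t] by simp
    moreover have "1 - u + u * c > 0"
      using u \<open>c > 0\<close> by (cases "u = 1") (auto intro!: add_pos_nonneg)
    ultimately have "Re (g t) = 0" "Im (g t) = 0"
      by (simp_all add: Complex_eq_0)
    then show False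
      using assms(6)[OF t] by (simp add: complex_eq_iff)
  qed
qed

lemma winding_number_continuous_family:
  fixes F :: "real \<Rightarrow> real \<Rightarrow> complex"
  assumes "convex I" "s1 \<in> I" "s2 \<in> I"
    and cont: "continuous_on (I \<times> {0..1}) (\<lambda>x. F (fst x) (snd x))"
    and loop: "\<And>s. s \<in> I \<Longrightarrow> F s 1 = F s 0"
    and nz: "\<And>s t. s \<in> I \<Longrightarrow> t \<in> {0..1} \<Longrightarrow> F s t \<noteq> 0"
  shows "winding_number (F s1) 0 = winding_number (F s2) 0"
proof (rule winding_number_homotopic_loops)
  define \<sigma> where "\<sigma> = (\<lambda>u::real. (1 - u) * s1 + u * s2)"
  have \<sigma>I: "\<sigma> u \<in> I" if "u \<in> {0..1}" for u
    using convexD[OF assms(1-3), of "1 - u" u] that by (simp add: \<sigma>_def)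
  have "continuous_on ({0..1} \<times> {0..1}) (\<lambda>x. F (\<sigma> (fst x)) (snd x))"
    using continuous_on_compose2[OF cont, of "{0..1} \<times> {0..1}" "\<lambda>x. (\<sigma> (fst x), snd x)"] \<sigma>I
    unfolding \<sigma>_def by (fastforce intro!: continuous_intros)
  then show "homotopic_loops (- {0}) (F s1) (F s2)"
    unfolding homotopic_loops
    by (intro exI[of _ "\<lambda>x. F (\<sigma> (fst x)) (snd x)"])
      (auto simp: pathfinish_def pathstart_def \<sigma>I loop nz, simp_all add: \<sigma>_def)
qed

lemma The_int_const_near_zero:
  fixes f :: "real \<Rightarrow> complex"
  assumes "\<And>r. 0 < r \<Longrightarrow> r < 1 \<Longrightarrow> f r = of_int n"
  shows "(THE w::int. \<exists>e>0. \<forall>r. 0 < r \<and> r < e \<longrightarrow> f r = of_int w) = n"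
proof (rule the_equality)
  show "\<exists>e>0. \<forall>r. 0 < r \<and> r < e \<longrightarrow> f r = of_int n"
    using assms by (intro exI[of _ 1]) auto
next
  fix w assume "\<exists>e>0. \<forall>r. 0 < r \<and> r < e \<longrightarrow> f r = of_int w"
  then obtain e where "e > 0" and e: "\<And>r. 0 < r \<Longrightarrow> r < e \<Longrightarrow> f r = of_int w" by blast
  define r where "r = min e 1 / 2"
  have "0 < r" "r < e" "r < 1" using \<open>e > 0\<close> by (auto simp: r_def)
  then have "(of_int w :: complex) = of_int n" using e assms by metis
  then show "w = n" by simp
qed

section \<open>Integral inequalities\<close>

lemma nn_integral_indicator_eq_integral:
  fixes F :: "real \<Rightarrow> real"
  assumes "continuous_on {a..b} F" "\<And>x. x \<in> {a<..<b} \<Longrightarrow> 0 \<le> F x"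
  shows "(\<integral>\<^sup>+x. indicator {a<..<b} x * ennreal (F x) \<partial>lborel) = ennreal (integral {a..b} F)"
proof -
  have "(F has_integral integral {a..b} F) {a<..<b}"
    using has_integral_open_interval[of F "integral {a..b} F" a b]
      integrable_continuous_interval[OF assms(1)]
    by (simp add: has_integral_integral)
  from nn_integral_has_integral_lebesgue'[OF assms(2) this]
  show ?thesis by (simp add: mult.commute)
qed

lemma integral_le_nn_integral:
  fixes l h :: "real \<Rightarrow> real"
  assumes "continuous_on {a..b} l" "\<And>t. t \<in> {a<..<b} \<Longrightarrow> l t \<le> h t"
  shows "ennreal (integral {a..b} l) \<le> (\<integral>\<^sup>+t. indicator {a<..<b} t * ennreal (h t) \<partial>lborel)"
proof -
  have cont: "continuous_on {a..b} (\<lambda>t. max (l t) 0)"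
    by (intro continuous_intros assms(1))
  have "integral {a..b} l \<le> integral {a..b} (\<lambda>t. max (l t) 0)"
    by (intro integral_le integrable_continuous_interval cont assms(1)) simp
  then have "ennreal (integral {a..b} l) \<le> ennreal (integral {a..b} (\<lambda>t. max (l t) 0))"
    by (rule ennreal_leI)
  also have "\<dots> = (\<integral>\<^sup>+t. indicator {a<..<b} t * ennreal (max (l t) 0) \<partial>lborel)"
    by (rule nn_integral_indicator_eq_integral[OF cont, symmetric]) simp
  also have "\<dots> \<le> (\<integral>\<^sup>+t. indicator {a<..<b} t * ennreal (h t) \<partial>lborel)"
  proof (rule nn_integral_mono)
    fix t
    show "indicator {a<..<b} t * ennreal (max (l t) 0) \<le> indicator {a<..<b} t * ennreal (h t)"
      using assms(2)[of t] by (cases "t \<in> {a<..<b}"; cases "l t \<le> 0") (auto intro: ennreal_leI)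
  qed
  finally show ?thesis .
qed

lemma borel_measurable_indicator_times_ennreal:
  fixes f :: "'a::euclidean_space \<Rightarrow> real"
  assumes "open S" "continuous_on S f"
  shows "(\<lambda>x. indicator S x * ennreal (f x)) \<in> borel_measurable borel"
proof -
  have "(\<lambda>x. indicator S x *\<^sub>R f x) \<in> borel_measurable borel"
    using assms by (intro borel_measurable_continuous_on_indicator borel_open)
  then have "(\<lambda>x. ennreal (indicator S x *\<^sub>R f x)) \<in> borel_measurable borel"
    by measurable
  moreover have "(\<lambda>x. ennreal (indicator S x *\<^sub>R f x)) = (\<lambda>x. indicator S x * ennreal (f x))"
    by (auto simp: fun_eq_iff indicator_def)
  ultimately show ?thesis by simp
qed

text \<open>Jensen's inequality for the convex function \<open>x \<mapsto> sqrt (s\<^sup>2 + x\<^sup>2)\<close>, proved by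
  integrating a supporting line.\<close>

lemma sqrt_integral_le_nn_integral_sqrt:
  fixes g :: "real \<Rightarrow> real"
  assumes cont: "continuous_on {a..b} g" and "a \<le> b"
  shows "ennreal (sqrt (((b - a) * s)\<^sup>2 + (integral {a..b} g)\<^sup>2))
    \<le> (\<integral>\<^sup>+t. indicator {a<..<b} t * ennreal (sqrt (s\<^sup>2 + (g t)\<^sup>2)) \<partial>lborel)"
proof -
  define G where "G = integral {a..b} g"
  define R where "R = sqrt (((b - a) * s)\<^sup>2 + G\<^sup>2)"
  have lhs: "sqrt (((b - a) * s)\<^sup>2 + (integral {a..b} g)\<^sup>2) = R"
    by (simp add: R_def G_def)
  show ?thesis
  proof (cases "R = 0")
    case True
    then show ?thesis by (simp add: lhs)
  next
    case False
    moreover have "R \<ge> 0" by (simp add: R_def)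
    ultimately have "R > 0" by simp
    define l where "l = (\<lambda>t. ((b - a) * s\<^sup>2) / R + (G / R) * g t)"
    have "l t \<le> sqrt (s\<^sup>2 + (g t)\<^sup>2)" for t
    proof -
      have "((b - a) * s, G) \<bullet> (s, g t) \<le> norm ((b - a) * s, G) * norm (s, g t)"
        by (rule norm_cauchy_schwarz)
      then have "(b - a) * s\<^sup>2 + G * g t \<le> R * sqrt (s\<^sup>2 + (g t)\<^sup>2)"
        by (simp add: norm_Pair R_def power2_eq_square algebra_simps)
      then show ?thesis
        using \<open>R > 0\<close> by (simp add: l_def field_simps)
    qed
    moreover have "integral {a..b} l = R"
    proof -
      have "integral {a..b} l = (b - a) * ((b - a) * s\<^sup>2) / R + (G / R) * G"
        unfolding l_def G_def using \<open>a \<le> b\<close> \<open>R > 0\<close>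
        by (subst integral_add) (auto intro!: integrable_continuous_interval continuous_intros cont)
      also have "\<dots> = (((b - a) * s)\<^sup>2 + G\<^sup>2) / R"
        using \<open>R > 0\<close> by (simp add: field_simps power2_eq_square)
      also have "((b - a) * s)\<^sup>2 + G\<^sup>2 = R\<^sup>2"
        by (simp add: R_def)
      finally show ?thesis
        using \<open>R > 0\<close> by (simp add: power2_eq_square)
    qed
    moreover have "continuous_on {a..b} l"
      unfolding l_def by (intro continuous_intros cont)
    ultimately show ?thesis
      using integral_le_nn_integral[of a b l "\<lambda>t. sqrt (s\<^sup>2 + (g t)\<^sup>2)"] by (simp add: lhs)
  qed
qed

section \<open>The length of the ellipse\<close>

lemma integral_cos_reflect:
  "integral {0..pi} (\<lambda>u. F (- cos u)) = integral {0..pi} (\<lambda>u. F (cos u))"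
proof -
  define f where "f = (\<lambda>x. F (cos x))"
  have "integral {0..pi} (\<lambda>u. F (- cos u)) = integral {- 0..- (- pi)} (\<lambda>u. (f \<circ> (+) pi) (- u))"
    by (simp add: f_def)
  also have "\<dots> = integral {- pi..0} (f \<circ> (+) pi)"
    by (rule Henstock_Kurzweil_Integration.integral_reflect_real)
  also have "\<dots> = integral {0..pi} f"
    using integral_shift_Icc_real[of "- pi" 0 f pi] by simp
  finally show ?thesis by (simp add: f_def)
qed

lemma integral_cos_period:
  fixes F :: "real \<Rightarrow> real"
  assumes "continuous_on UNIV F"
  shows "integral {0..2*pi} (\<lambda>u. F (cos u)) = 2 * integral {0..pi} (\<lambda>u. F (cos u))"
proof -
  have "(\<lambda>u. F (cos u)) integrable_on {0..2*pi}"
    by (intro integrable_continuous_interval continuous_on_compose2[OF assms])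
      (auto intro!: continuous_intros)
  then have "integral {0..2*pi} (\<lambda>u. F (cos u))
      = integral {0..pi} (\<lambda>u. F (cos u)) + integral {pi..2*pi} (\<lambda>u. F (cos u))"
    by (intro Henstock_Kurzweil_Integration.integral_combine[symmetric]) auto
  also have "integral {pi..2*pi} (\<lambda>u. F (cos u)) = integral {0..pi} (\<lambda>u. F (- cos u))"
    using integral_shift_Icc_real[of 0 pi "\<lambda>u. F (cos u)" pi] by (simp add: o_def add.commute)
  finally show ?thesis
    using integral_cos_reflect[of F] by simp
qed

lemma integral_cos_double:
  fixes F :: "real \<Rightarrow> real"
  assumes "continuous_on UNIV F"
  shows "integral {0..2*pi} (\<lambda>t. F (cos (2 * t))) = 2 * integral {0..pi} (\<lambda>u. F (cos u))"
proof -
  have "(\<lambda>u. F (cos u)) integrable_on {0..4*pi}"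
    by (intro integrable_continuous_interval continuous_on_compose2[OF assms])
      (auto intro!: continuous_intros)
  then have "integral {0..4*pi} (\<lambda>u. F (cos u))
      = integral {0..2*pi} (\<lambda>u. F (cos u)) + integral {2*pi..4*pi} (\<lambda>u. F (cos u))"
    by (intro Henstock_Kurzweil_Integration.integral_combine[symmetric]) auto
  also have "integral {2*pi..4*pi} (\<lambda>u. F (cos u)) = integral {0..2*pi} (\<lambda>u. F (cos u))"
  proof -
    have "(\<lambda>u. F (cos u)) \<circ> (+) (2*pi) = (\<lambda>u. F (cos u))"
      by (simp add: fun_eq_iff cos_add)
    moreover have "{0 + 2*pi..2*pi + 2*pi} = {2*pi..4*pi}"
      by simp
    ultimately show ?thesis
      using integral_shift_Icc_real[of 0 "2*pi" "\<lambda>u. F (cos u)" "2*pi"] by simp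
  qed
  finally have "integral {0..4*pi} (\<lambda>u. F (cos u)) = 4 * integral {0..pi} (\<lambda>u. F (cos u))"
    using integral_cos_period[OF assms] by simp
  moreover have "integral {0..2*pi} (\<lambda>t. F (cos (2 * t))) = integral {0..4*pi} (\<lambda>u. F (cos u)) / 2"
    using integral_stretch_real[of 2 0 "4*pi" "\<lambda>u. F (cos u)"] by simp
  ultimately show ?thesis by simp
qed

lemma ellipse_length_eq_integral:
  fixes q :: real
  shows "ellipse_length (1 + \<bar>q\<bar>) (\<bar>q\<bar> - 1) = 2 * integral {0..pi} (\<lambda>u. sqrt (1 + q\<^sup>2 + 2 * q * cos u))"
proof -
  have "((1 + p) * sin t)\<^sup>2 + ((p - 1) * cos t)\<^sup>2 = 1 + p\<^sup>2 - 2 * p * cos (2 * t)" for p t :: real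
    using sin_cos_squared_add[of t] unfolding cos_double power2_eq_square by algebra
  then have "ellipse_length (1 + \<bar>q\<bar>) (\<bar>q\<bar> - 1)
      = 2 * integral {0..pi} (\<lambda>u. sqrt (1 + q\<^sup>2 + 2 * \<bar>q\<bar> * - cos u))"
    unfolding ellipse_length_def
    using integral_cos_double[of "\<lambda>c. sqrt (1 + q\<^sup>2 + 2 * \<bar>q\<bar> * - c)"]
    by (simp add: continuous_intros power2_abs)
  also have "integral {0..pi} (\<lambda>u. sqrt (1 + q\<^sup>2 + 2 * \<bar>q\<bar> * - cos u))
      = integral {0..pi} (\<lambda>u. sqrt (1 + q\<^sup>2 + 2 * q * cos u))"
  proof (cases "q \<ge> 0")
    case True
    then show ?thesis
      using integral_cos_reflect[of "\<lambda>c. sqrt (1 + q\<^sup>2 + 2 * q * - c)"] by simp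
  qed simp
  finally show ?thesis .
qed

lemma pi_ellipse_length_eq_integral:
  fixes q :: real
  shows "pi * ellipse_length (1 + \<bar>q\<bar>) (\<bar>q\<bar> - 1)
    = integral {0..pi} (\<lambda>th. 2 * pi * sqrt ((sin th)\<^sup>2 + (q + cos th)\<^sup>2))"
proof -
  have "(sin th)\<^sup>2 + (q + cos th)\<^sup>2 = 1 + q\<^sup>2 + 2 * q * cos th" for th
    using sin_cos_squared_add[of th] by (simp add: power2_eq_square algebra_simps)
  then show ?thesis
    by (simp add: ellipse_length_eq_integral)
qed

section \<open>A unit tangent field in spherical coordinates\<close>

lemma Re_scaleR_one_add_Im_scaleR_i: "Re z *\<^sub>R 1 + Im z *\<^sub>R \<i> = z"
  by (simp add: complex_eq_iff)

lemma continuous_on_slice: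
  assumes "continuous_on (A \<times> UNIV) (\<lambda>x. f (fst x) (snd x))" "th \<in> A" "continuous_on X h"
  shows "continuous_on X (\<lambda>t. f th (h t))"
proof -
  have "continuous_on X (\<lambda>t. (th, h t))" "(\<lambda>t. (th, h t)) ` X \<subseteq> A \<times> UNIV"
    using assms(2,3) by (auto intro!: continuous_intros)
  from continuous_on_compose2[OF assms(1) this] show ?thesis by simp
qed

locale C1_unit_tangent_field =
  fixes v :: "real^3 \<Rightarrow> real^3"
  assumes differentiable: "\<And>p. p \<in> Mset \<Longrightarrow> v differentiable (at p)"
    and continuous_Dv: "\<And>i. i \<in> Basis \<Longrightarrow> continuous_on Mset (\<lambda>p. Dv v p i)"
    and unit: "\<And>p. p \<in> Mset \<Longrightarrow> norm (v p) = 1"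
    and tangent: "\<And>p. p \<in> Mset \<Longrightarrow> v p \<bullet> p = 0"

lemma smooth_unit_vf_imp_C1_unit_tangent_field:
  assumes "smooth_unit_vf v"
  shows "C1_unit_tangent_field v"
proof -
  obtain U where MU: "Mset \<subseteq> U" and "smooth_on U v"
    using assms unfolding smooth_unit_vf_def by blast
  then have C1: "Ck_on (Suc 0) U v"
    unfolding smooth_on_def by blast
  show ?thesis
  proof
    show "v differentiable (at p)" if "p \<in> Mset" for p
      using C1 MU that by auto
    show "continuous_on Mset (\<lambda>p. Dv v p i)" if "i \<in> Basis" for i
      using C1 MU that unfolding Dv_def by (auto elim!: continuous_on_subset)
    show "norm (v p) = 1" "v p \<bullet> p = 0" if "p \<in> Mset" for p
      using assms that unfolding smooth_unit_vf_def by auto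
  qed
qed

context C1_unit_tangent_field
begin

lemma continuous_on_v: "continuous_on Mset v"
  using differentiable
  by (meson continuous_at_imp_continuous_on differentiable_imp_continuous_within)

lemma continuous_on_Dv:
  assumes "continuous_on S p" "p ` S \<subseteq> Mset" "continuous_on S w"
  shows "continuous_on S (\<lambda>s. Dv v (p s) (w s))"
proof -
  have rep: "Dv v q h = (\<Sum>i\<in>Basis. (h \<bullet> i) *\<^sub>R Dv v q i)" if "q \<in> Mset" for q h
  proof -
    have "linear (Dv v q)"
      using differentiable[OF that] linear_frechet_derivative unfolding Dv_def[abs_def] by blast
    have "Dv v q h = Dv v q (\<Sum>i\<in>Basis. (h \<bullet> i) *\<^sub>R i)"
      by (simp add: euclidean_representation)
    also have "\<dots> = (\<Sum>i\<in>Basis. (h \<bullet> i) *\<^sub>R Dv v q i)"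
      using \<open>linear (Dv v q)\<close> by (simp add: linear_sum linear_scale)
    finally show ?thesis .
  qed
  have "continuous_on S (\<lambda>s. \<Sum>i\<in>Basis. (w s \<bullet> i) *\<^sub>R Dv v (p s) i)"
    using assms by (intro continuous_intros continuous_on_compose2[OF continuous_Dv]) auto
  then show ?thesis
    by (rule continuous_on_eq) (use rep assms(2) in auto)
qed

definition dphi_v :: "real \<Rightarrow> real \<Rightarrow> real^3" where
  "dphi_v th ph = Dv v (sph (th,ph)) (sin th *\<^sub>R e_phi ph)"

definition frame_coord :: "real \<Rightarrow> real \<Rightarrow> complex" where
  "frame_coord th ph = Complex (v (sph (th,ph)) \<bullet> e_theta th ph) (v (sph (th,ph)) \<bullet> e_phi ph)"

definition frame_coord_dphi :: "real \<Rightarrow> real \<Rightarrow> complex" where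
  "frame_coord_dphi th ph =
     Complex (dphi_v th ph \<bullet> e_theta th ph + cos th * Im (frame_coord th ph))
             (dphi_v th ph \<bullet> e_phi ph - cos th * Re (frame_coord th ph))"

definition angular_speed :: "real \<Rightarrow> real \<Rightarrow> real" where
  "angular_speed th ph = - (dphi_v th ph \<bullet> vperp v (sph (th,ph)))"

context
  fixes th :: real
  assumes th: "0 < th" "th < pi"
begin

lemma v_sph_eq:
  "v (sph (th,ph)) = Re (frame_coord th ph) *\<^sub>R e_theta th ph + Im (frame_coord th ph) *\<^sub>R e_phi ph"
  using tangent_sph_frame_expansion tangent[OF sph_in_Mset[OF th]] by (simp add: frame_coord_def)

lemma norm_frame_coord: "norm (frame_coord th ph) = 1"
proof -
  have "1 = v (sph (th,ph)) \<bullet> v (sph (th,ph))"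
    using unit[OF sph_in_Mset[OF th]] by (simp add: norm_eq_1)
  also have "\<dots> = (Re (frame_coord th ph))\<^sup>2 + (Im (frame_coord th ph))\<^sup>2"
    using sph_frame_orthonormal(4)[of th ph]
    by (subst (1 2) v_sph_eq) (simp add: inner_add_left inner_add_right sph_frame_orthonormal
        inner_commute power2_eq_square)
  finally show ?thesis by (simp add: cmod_def)
qed

lemma has_vector_derivative_v_sph:
  "((\<lambda>ph. v (sph (th,ph))) has_vector_derivative dphi_v th ph) (at ph)"
proof -
  have "(v has_derivative Dv v (sph (th,ph))) (at (sph (th,ph)))"
    using differentiable[OF sph_in_Mset[OF th]] frechet_derivative_works
    unfolding Dv_def[abs_def] by blast
  from diff_chain_at[OF has_vector_derivative_sph_phi[of th ph, unfolded has_vector_derivative_def] this]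
  have "((\<lambda>ph. v (sph (th,ph))) has_derivative
      (\<lambda>x. Dv v (sph (th,ph)) (x *\<^sub>R (sin th *\<^sub>R e_phi ph)))) (at ph)"
    by (simp add: o_def)
  moreover have "linear (Dv v (sph (th,ph)))"
    using differentiable[OF sph_in_Mset[OF th]] linear_frechet_derivative
    unfolding Dv_def[abs_def] by blast
  ultimately show ?thesis
    unfolding has_vector_derivative_def dphi_v_def by (simp add: linear_scale)
qed

lemma has_vector_derivative_frame_coord:
  "(frame_coord th has_vector_derivative frame_coord_dphi th ph) (at ph)"
proof -
  have "((\<lambda>ph. v (sph (th,ph)) \<bullet> e_theta th ph) has_vector_derivative
      v (sph (th,ph)) \<bullet> (cos th *\<^sub>R e_phi ph) + dphi_v th ph \<bullet> e_theta th ph) (at ph)"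
    by (rule bounded_bilinear.has_vector_derivative[OF bounded_bilinear_inner
        has_vector_derivative_v_sph has_vector_derivative_e_theta_phi])
  then have re: "((\<lambda>ph. Re (frame_coord th ph)) has_real_derivative Re (frame_coord_dphi th ph)) (at ph)"
    by (simp add: has_real_derivative_iff_has_vector_derivative frame_coord_def
        frame_coord_dphi_def algebra_simps)
  have "((\<lambda>ph. v (sph (th,ph)) \<bullet> e_phi ph) has_vector_derivative
      v (sph (th,ph)) \<bullet> - (sin th *\<^sub>R sph (th,ph) + cos th *\<^sub>R e_theta th ph)
      + dphi_v th ph \<bullet> e_phi ph) (at ph)"
    by (rule bounded_bilinear.has_vector_derivative[OF bounded_bilinear_inner
        has_vector_derivative_v_sph has_vector_derivative_e_phi])
  then have im: "((\<lambda>ph. Im (frame_coord th ph)) has_real_derivative Im (frame_coord_dphi th ph)) (at ph)"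
    using tangent[OF sph_in_Mset[OF th]]
    by (simp add: has_real_derivative_iff_has_vector_derivative frame_coord_def
        frame_coord_dphi_def inner_add_right algebra_simps)
  have "((\<lambda>ph. Re (frame_coord th ph) *\<^sub>R 1 + Im (frame_coord th ph) *\<^sub>R \<i>) has_vector_derivative
      Re (frame_coord_dphi th ph) *\<^sub>R 1 + Im (frame_coord_dphi th ph) *\<^sub>R \<i>) (at ph)"
    using has_vector_derivative_add[OF has_vector_derivative_scaleR[OF re has_vector_derivative_const]
        has_vector_derivative_scaleR[OF im has_vector_derivative_const]] by simp
  then show ?thesis
    by (simp add: Re_scaleR_one_add_Im_scaleR_i)
qed

lemma angular_speed_eq:
  "angular_speed th ph = Im (frame_coord_dphi th ph / frame_coord th ph) + cos th"
proof -
  define A B where "A = Re (frame_coord th ph)" and "B = Im (frame_coord th ph)"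
  have "vperp v (sph (th,ph)) = B *\<^sub>R e_theta th ph - A *\<^sub>R e_phi ph"
    unfolding vperp_def A_def B_def by (subst v_sph_eq) (rule cross3_sph_frame)
  then have "angular_speed th ph = A * (dphi_v th ph \<bullet> e_phi ph) - B * (dphi_v th ph \<bullet> e_theta th ph)"
    by (simp add: angular_speed_def inner_diff_right)
  moreover have "A\<^sup>2 + B\<^sup>2 = 1"
    using norm_frame_coord[of ph] by (simp add: A_def B_def cmod_def)
  moreover have "frame_coord_dphi th ph / frame_coord th ph
      = frame_coord_dphi th ph * cnj (frame_coord th ph)"
    using norm_frame_coord[of ph] by (simp add: divide_conv_cnj)
  then have "Im (frame_coord_dphi th ph / frame_coord th ph)
      = A * (dphi_v th ph \<bullet> e_phi ph) - B * (dphi_v th ph \<bullet> e_theta th ph) - cos th * (A\<^sup>2 + B\<^sup>2)"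
    by (simp add: frame_coord_dphi_def A_def B_def power2_eq_square algebra_simps)
  ultimately show ?thesis
    by simp
qed

end

lemma continuous_on_v_sph: "continuous_on ({0<..<pi} \<times> UNIV) (\<lambda>x. v (sph x))"
  by (rule continuous_on_compose2[OF continuous_on_v continuous_on_sph]) (auto intro!: sph_in_Mset)

lemma continuous_on_frame_coord:
  "continuous_on ({0<..<pi} \<times> UNIV) (\<lambda>x. frame_coord (fst x) (snd x))"
  unfolding frame_coord_def Complex_eq prod.collapse
  by (intro continuous_intros continuous_on_v_sph continuous_on_e_theta continuous_on_e_phi)

lemma continuous_on_dphi_v:
  "continuous_on ({0<..<pi} \<times> UNIV) (\<lambda>x. dphi_v (fst x) (snd x))"
  unfolding dphi_v_def prod.collapse
  by (rule continuous_on_Dv)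
    (use sph_in_Mset in \<open>auto intro!: continuous_intros continuous_on_sph continuous_on_e_phi\<close>)

lemma continuous_on_frame_coord_dphi:
  "continuous_on ({0<..<pi} \<times> UNIV) (\<lambda>x. frame_coord_dphi (fst x) (snd x))"
  unfolding frame_coord_dphi_def Complex_eq
  by (intro continuous_intros continuous_on_dphi_v continuous_on_frame_coord
      continuous_on_e_theta continuous_on_e_phi)

lemma continuous_on_angular_speed:
  "continuous_on ({0<..<pi} \<times> UNIV) (\<lambda>x. angular_speed (fst x) (snd x))"
  unfolding angular_speed_def vperp_def prod.collapse
  by (intro continuous_intros continuous_on_cross continuous_on_dphi_v continuous_on_v_sph
      continuous_on_sph)

context
  fixes th :: real
  assumes th: "0 < th" "th < pi"
begin

lemma has_vector_derivative_frame_loop: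
  "((\<lambda>t. frame_coord th (2*pi*t)) has_vector_derivative (2*pi) *\<^sub>R frame_coord_dphi th (2*pi*t)) (at t)"
proof -
  have "((\<lambda>t. 2*pi*t) has_vector_derivative 2*pi) (at t)"
    by (auto intro!: derivative_eq_intros simp: has_real_derivative_iff_has_vector_derivative[symmetric])
  from vector_diff_chain_at[OF this has_vector_derivative_frame_coord[OF th]]
  show ?thesis by (simp add: o_def)
qed

lemma continuous_on_frame_loop_derivative:
  "continuous_on X (\<lambda>t. (2*pi) *\<^sub>R frame_coord_dphi th (2*pi*t))"
  using continuous_on_slice[OF continuous_on_frame_coord_dphi, of th X "\<lambda>t. 2*pi*t"] th
  by (auto intro!: continuous_intros)

lemma frame_coord_nonzero: "frame_coord th ph \<noteq> 0"
  using norm_frame_coord[OF th, of ph] by auto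

lemma frame_loop_closed_path:
  "path (\<lambda>t. frame_coord th (2*pi*t))"
  "pathfinish (\<lambda>t. frame_coord th (2*pi*t)) = pathstart (\<lambda>t. frame_coord th (2*pi*t))"
  using continuous_on_slice[OF continuous_on_frame_coord, of th "{0..1}" "\<lambda>t. 2*pi*t"] th
  by (auto intro!: continuous_intros simp: path_def pathfinish_def pathstart_def
      frame_coord_def sph_def e_theta_def e_phi_def)

end

lemma winding_number_frame_loop_eq:
  assumes "th1 \<in> {0<..<pi}" "th2 \<in> {0<..<pi}"
  shows "winding_number (\<lambda>t. frame_coord th1 (2*pi*t)) 0 = winding_number (\<lambda>t. frame_coord th2 (2*pi*t)) 0"
proof (rule winding_number_continuous_family[where F = "\<lambda>s t. frame_coord s (2*pi*t)"])
  have "continuous_on ({0<..<pi} \<times> {0..1}) (\<lambda>x. (fst x, 2*pi * snd x))"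
    "(\<lambda>x. (fst x, 2*pi * snd x)) ` ({0<..<pi} \<times> {0..1}) \<subseteq> {0<..<pi} \<times> UNIV"
    by (auto intro!: continuous_intros)
  from continuous_on_compose2[OF continuous_on_frame_coord this]
  show "continuous_on ({0<..<pi} \<times> {0..1}) (\<lambda>x. frame_coord (fst x) (2*pi * snd x))"
    by simp
qed (use assms frame_coord_nonzero frame_loop_closed_path(2) in
    \<open>auto simp: pathfinish_def pathstart_def\<close>)

definition frame_degree :: int where
  "frame_degree = (THE n. winding_number (\<lambda>t. frame_coord (pi/2) (2*pi*t)) 0 = of_int n)"

lemma winding_number_frame_loop:
  assumes "0 < th" "th < pi"
  shows "winding_number (\<lambda>t. frame_coord th (2*pi*t)) 0 = of_int frame_degree"
proof -
  have "winding_number (\<lambda>t. frame_coord (pi/2) (2*pi*t)) 0 \<in> \<int>"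
    using frame_coord_nonzero[of "pi/2"]
    by (intro integer_winding_number frame_loop_closed_path) (auto simp: path_image_def)
  then obtain n where n: "winding_number (\<lambda>t. frame_coord (pi/2) (2*pi*t)) 0 = of_int n"
    by (auto elim: Ints_cases)
  then have "frame_degree = n"
    unfolding frame_degree_def by (rule the_equality) (simp_all add: n)
  then show ?thesis
    using winding_number_frame_loop_eq[of th "pi/2"] n assms by simp
qed

lemma has_integral_angular_speed:
  assumes "0 < th" "th < pi"
  shows "(angular_speed th has_integral 2*pi * (frame_degree + cos th)) {0..2*pi}"
proof -
  define g g' where "g = (\<lambda>t. frame_coord th (2*pi*t))"
    and "g' = (\<lambda>t. (2*pi) *\<^sub>R frame_coord_dphi th (2*pi*t))"
  have "(\<lambda>t. g' t / g t) integrable_on {0..1}"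
    using frame_loop_closed_path(1)[OF assms] frame_coord_nonzero[OF assms]
    unfolding g_def g'_def path_def
    by (intro integrable_continuous_interval continuous_intros continuous_on_frame_loop_derivative[OF assms])
      auto
  moreover have "integral {0..1} (\<lambda>t. g' t / g t) = 2*pi*\<i> * of_int frame_degree"
    using winding_number_eq_integral_logderiv[OF has_vector_derivative_frame_loop[OF assms]
        continuous_on_frame_loop_derivative[OF assms] frame_coord_nonzero[OF assms]]
      winding_number_frame_loop[OF assms]
    unfolding g_def g'_def by simp
  ultimately have "((\<lambda>t. g' t / g t) has_integral 2*pi*\<i> * of_int frame_degree) {0..1}"
    by (metis integrable_integral)
  from has_integral_Im[OF this]
  have "((\<lambda>t. Im (g' t / g t)) has_integral 2*pi*frame_degree) {0..1}"
    by simp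
  from has_integral_add[OF has_integral_divide[OF this, of "2*pi"] has_integral_const_real[of "cos th" 0 1]]
  have "((\<lambda>t. Im (g' t / g t) / (2*pi) + cos th) has_integral frame_degree + cos th) {0..1}"
    by simp
  moreover have "Im (g' t / g t) / (2*pi) + cos th = angular_speed th (2*pi*t)" for t
  proof -
    have "g' t / g t = (2*pi) *\<^sub>R (frame_coord_dphi th (2*pi*t) / frame_coord th (2*pi*t))"
      by (simp add: g_def g'_def scaleR_conv_of_real)
    then show ?thesis
      using angular_speed_eq[OF assms, of "2*pi*t"] by simp
  qed
  ultimately have "((\<lambda>t. angular_speed th (2*pi*t)) has_integral frame_degree + cos th)
      ((\<lambda>x. x / (2*pi)) ` {0..2*pi})"
    by simp
  then show ?thesis
    by (subst (asm) has_integral_stretch_real_iff) simp_all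
qed

lemma nn_integral_angular_speed_ge:
  assumes "0 < th" "th < pi"
  shows "ennreal (2*pi * sqrt ((sin th)\<^sup>2 + (frame_degree + cos th)\<^sup>2))
    \<le> (\<integral>\<^sup>+ph. indicator {0<..<2*pi} ph * ennreal (sqrt ((sin th)\<^sup>2 + (angular_speed th ph)\<^sup>2)) \<partial>lborel)"
proof -
  have "continuous_on {0..2*pi} (angular_speed th)"
    using continuous_on_slice[OF continuous_on_angular_speed, of th "{0..2*pi}" "\<lambda>t. t"] assms
    by (simp add: continuous_on_id)
  from sqrt_integral_le_nn_integral_sqrt[OF this, of "sin th"]
  have "ennreal (sqrt (((2*pi) * sin th)\<^sup>2 + (2*pi * (frame_degree + cos th))\<^sup>2))
    \<le> (\<integral>\<^sup>+ph. indicator {0<..<2*pi} ph * ennreal (sqrt ((sin th)\<^sup>2 + (angular_speed th ph)\<^sup>2)) \<partial>lborel)"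
    using integral_unique[OF has_integral_angular_speed[OF assms]] by simp
  moreover have "sqrt (((2*pi) * sin th)\<^sup>2 + (2*pi * (frame_degree + cos th))\<^sup>2)
      = 2*pi * sqrt ((sin th)\<^sup>2 + (frame_degree + cos th)\<^sup>2)"
    by (simp add: power_mult_distrib real_sqrt_mult flip: distrib_left)
  ultimately show ?thesis by simp
qed

lemma sqrt_angular_speed_le:
  fixes th ph :: real
  assumes "0 < th" "th < pi"
  defines "p \<equiv> sph (th,ph)"
  shows "sqrt ((sin th)\<^sup>2 + (angular_speed th ph)\<^sup>2)
    \<le> sqrt (1 + (gamma_vf v p)\<^sup>2 + (delta_vf v p)\<^sup>2) * sin th"
proof -
  have p: "p \<in> Mset"
    unfolding p_def by (rule sph_in_Mset[OF assms(1,2)])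
  have "linear (Dv v p)"
    using differentiable[OF p] linear_frechet_derivative unfolding Dv_def[abs_def] by blast
  then have "angular_speed th ph = - (sin th * (Dv v p (e_phi ph) \<bullet> vperp v p))"
    by (simp add: angular_speed_def dphi_v_def p_def linear_scale)
  moreover have "(Dv v p (e_phi ph) \<bullet> vperp v p)\<^sup>2 \<le> (gamma_vf v p)\<^sup>2 + (delta_vf v p)\<^sup>2"
    using differentiable[OF p] unit[OF p] tangent[OF p] sph_frame_orthonormal
    by (intro inner_Dv_vperp_le) (auto simp: p_def norm_sph norm_eq_1)
  then have "(sin th)\<^sup>2 * (Dv v p (e_phi ph) \<bullet> vperp v p)\<^sup>2
      \<le> (sin th)\<^sup>2 * ((gamma_vf v p)\<^sup>2 + (delta_vf v p)\<^sup>2)"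
    by (rule mult_left_mono) simp
  ultimately have "(sin th)\<^sup>2 + (angular_speed th ph)\<^sup>2
      \<le> (sin th)\<^sup>2 * (1 + (gamma_vf v p)\<^sup>2 + (delta_vf v p)\<^sup>2)"
    by (simp add: power_mult_distrib algebra_simps)
  then have "sqrt ((sin th)\<^sup>2 + (angular_speed th ph)\<^sup>2)
      \<le> sqrt ((sin th)\<^sup>2 * (1 + (gamma_vf v p)\<^sup>2 + (delta_vf v p)\<^sup>2))"
    by (rule real_sqrt_le_mono)
  also have "\<dots> = sqrt (1 + (gamma_vf v p)\<^sup>2 + (delta_vf v p)\<^sup>2) * sin th"
    using sin_gt_zero[OF assms(1,2)] by (simp add: real_sqrt_mult)
  finally show ?thesis .
qed

lemma vol_vf_ge:
  "(\<integral>\<^sup>+th. indicator {0<..<pi} th * ennreal (2*pi * sqrt ((sin th)\<^sup>2 + (frame_degree + cos th)\<^sup>2)) \<partial>lborel)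
    \<le> vol_vf v"
proof -
  define Q :: "(real \<times> real) set" where "Q = {0<..<pi} \<times> {0<..<2*pi}"
  define q where "q = (\<lambda>x. sqrt ((sin (fst x))\<^sup>2 + (angular_speed (fst x) (snd x))\<^sup>2))"
  have "continuous_on Q q"
    unfolding q_def Q_def
    by (intro continuous_intros continuous_on_subset[OF continuous_on_angular_speed]) auto
  then have meas: "(\<lambda>x. indicator Q x * ennreal (q x)) \<in> borel_measurable (lborel \<Otimes>\<^sub>M lborel)"
    using borel_measurable_indicator_times_ennreal[of Q q] by (simp add: lborel_prod Q_def open_Times)
  have "(\<integral>\<^sup>+th. indicator {0<..<pi} th * ennreal (2*pi * sqrt ((sin th)\<^sup>2 + (frame_degree + cos th)\<^sup>2)) \<partial>lborel)
      \<le> (\<integral>\<^sup>+th. \<integral>\<^sup>+ph. indicator Q (th, ph) * ennreal (q (th, ph)) \<partial>lborel \<partial>lborel)"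
  proof (rule nn_integral_mono)
    fix th :: real
    show "indicator {0<..<pi} th * ennreal (2*pi * sqrt ((sin th)\<^sup>2 + (frame_degree + cos th)\<^sup>2))
        \<le> (\<integral>\<^sup>+ph. indicator Q (th, ph) * ennreal (q (th, ph)) \<partial>lborel)"
      using nn_integral_angular_speed_ge[of th]
      by (cases "th \<in> {0<..<pi}") (auto simp: Q_def q_def indicator_times)
  qed
  also have "\<dots> = (\<integral>\<^sup>+x. indicator Q x * ennreal (q x) \<partial>lborel)"
    using lborel.nn_integral_fst[OF meas] by (simp add: lborel_prod)
  also have "\<dots> \<le> vol_vf v"
    unfolding vol_vf_def sphere_nn_integral_def Q_def[symmetric]
  proof (rule nn_integral_mono)
    fix x :: "real \<times> real"
    show "indicator Q x * ennreal (q x) \<le> indicator Q x *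
        ennreal (sqrt (1 + (gamma_vf v (sph x))\<^sup>2 + (delta_vf v (sph x))\<^sup>2) * sin (fst x))"
      using sqrt_angular_speed_le[of "fst x" "snd x"]
      by (cases "x \<in> Q") (auto simp: Q_def q_def intro: ennreal_leI)
  qed
  finally show ?thesis .
qed

lemma chart_coords_sph:
  assumes "0 < th" "th < pi"
  shows "Complex (v (sph (th,ph)) $ 1) (v (sph (th,ph)) $ 2)
    = cis ph * Complex (cos th * Re (frame_coord th ph)) (Im (frame_coord th ph))"
  by (subst (1 2) v_sph_eq[OF assms]) (simp add: complex_eq_iff e_theta_def e_phi_def algebra_simps)

lemma winding_number_chart_coords_cis:
  assumes "0 < th" "th < pi"
    and g: "\<And>t. (g has_vector_derivative g' t) (at t)" "continuous_on {0..1} g'"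
      "\<And>t. t \<in> {0..1} \<Longrightarrow> g t \<noteq> 0" "pathfinish g = pathstart g"
    and "c > 0"
    and chart: "\<And>t. cos th * Re (frame_coord th (2*pi*t)) = c * Re (g t)"
      "\<And>t. Im (frame_coord th (2*pi*t)) = Im (g t)"
  shows "winding_number (\<lambda>t. Complex (v (sph (th, 2*pi*t)) $ 1) (v (sph (th, 2*pi*t)) $ 2)) 0
    = 1 + winding_number g 0"
proof -
  have "path g"
    using g(1) unfolding path_def
    by (meson continuous_at_imp_continuous_on has_vector_derivative_continuous)
  have "winding_number (\<lambda>t. Complex (v (sph (th, 2*pi*t)) $ 1) (v (sph (th, 2*pi*t)) $ 2)) 0
      = winding_number (\<lambda>t. cis (2*pi*t) * Complex (c * Re (g t)) (Im (g t))) 0"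
    using chart_coords_sph[OF assms(1,2)] chart by simp
  also have "\<dots> = winding_number (\<lambda>t. cis (2*pi*t) * g t) 0"
    by (rule winding_number_mult_stretch_Re)
      (use \<open>path g\<close> g(3,4) \<open>c > 0\<close> in \<open>auto simp: path_def pathfinish_def pathstart_def intro!: continuous_intros\<close>)
  also have "\<dots> = 1 + winding_number g 0"
    by (rule winding_number_cis_mult[OF g(1-3)])
  finally show ?thesis .
qed

lemma poincare_index_northP: "poincare_index v northP = 1 + frame_degree"
  unfolding poincare_index_def
proof (rule The_int_const_near_zero)
  fix r :: real
  assume r: "0 < r" "r < 1"
  define th where "th = arcsin r"
  have th: "0 < th" "th < pi/2"
    using r arcsin_less_mono[of 0 r] arcsin_lt_bounded[of r] by (auto simp: th_def)
  then have "cos th > 0" by (simp add: cos_gt_zero)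
  have "winding_number (\<lambda>t. Complex (v (sph (th, 2*pi*t)) $ 1) (v (sph (th, 2*pi*t)) $ 2)) 0
      = 1 + winding_number (\<lambda>t. frame_coord th (2*pi*t)) 0"
    using th \<open>cos th > 0\<close>
    by (intro winding_number_chart_coords_cis[where c = "cos th"
          and g' = "\<lambda>t. (2*pi) *\<^sub>R frame_coord_dphi th (2*pi*t)"]
        has_vector_derivative_frame_loop continuous_on_frame_loop_derivative
        frame_coord_nonzero frame_loop_closed_path) auto
  then show "winding_number (\<lambda>t. Complex (v (pole_loop (northP $ 3) r t) $ 1)
      (v (pole_loop (northP $ 3) r t) $ 2)) 0 = of_int (1 + frame_degree)"
    using th winding_number_frame_loop[of th] by (simp add: pole_loop_northP[OF r] th_def)
qed

lemma poincare_index_southP: "poincare_index v southP = 1 - frame_degree"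
  unfolding poincare_index_def
proof (rule The_int_const_near_zero)
  fix r :: real
  assume r: "0 < r" "r < 1"
  define th where "th = pi - arcsin r"
  have th: "pi/2 < th" "th < pi"
    using r arcsin_less_mono[of 0 r] arcsin_lt_bounded[of r] by (auto simp: th_def)
  then have th': "0 < th" "th < pi" "cos th < 0"
    using pi_gt_zero cos_lt_zero_pi[of th] by linarith+
  have der: "((\<lambda>t. - cnj (frame_coord th (2*pi*t))) has_vector_derivative
      - cnj ((2*pi) *\<^sub>R frame_coord_dphi th (2*pi*t))) (at t)" for t
    by (intro derivative_intros has_vector_derivative_frame_loop th'(1,2))
  have cont: "continuous_on {0..1} (\<lambda>t. - cnj ((2*pi) *\<^sub>R frame_coord_dphi th (2*pi*t)))"
    by (intro continuous_intros continuous_on_frame_loop_derivative th'(1,2))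
  have "winding_number (\<lambda>t. Complex (v (sph (th, 2*pi*t)) $ 1) (v (sph (th, 2*pi*t)) $ 2)) 0
      = 1 + winding_number (\<lambda>t. - cnj (frame_coord th (2*pi*t))) 0"
    using th' frame_coord_nonzero[of th] frame_loop_closed_path(2)[of th]
    by (intro winding_number_chart_coords_cis[OF _ _ der cont, where c = "- cos th"])
      (auto simp: pathfinish_def pathstart_def)
  also have "winding_number (\<lambda>t. - cnj (frame_coord th (2*pi*t))) 0 = - of_int frame_degree"
    using winding_number_neg_cnj[OF has_vector_derivative_frame_loop continuous_on_frame_loop_derivative
        frame_coord_nonzero] winding_number_frame_loop th' by simp
  finally show "winding_number (\<lambda>t. Complex (v (pole_loop (southP $ 3) r t) $ 1)
      (v (pole_loop (southP $ 3) r t) $ 2)) 0 = of_int (1 - frame_degree)"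
    by (simp add: pole_loop_southP[OF r] th_def)
qed

end

theorem theorem1:
  fixes v :: "real^3 \<Rightarrow> real^3" and k :: int
  assumes "smooth_unit_vf v"
    and "k = max (poincare_index v northP) (poincare_index v southP)"
    and "k > 2"
  shows "vol_vf v \<ge> ennreal (pi * ellipse_length (real_of_int k) (real_of_int k - 2))"
proof -
  interpret C1_unit_tangent_field v
    using assms(1) by (rule smooth_unit_vf_imp_C1_unit_tangent_field)
  define m where "m = real_of_int frame_degree"
  have k: "real_of_int k = 1 + \<bar>m\<bar>"
    using assms(2) by (simp add: poincare_index_northP poincare_index_southP m_def max_def)
  have "ennreal (pi * ellipse_length (real_of_int k) (real_of_int k - 2))
      = ennreal (integral {0..pi} (\<lambda>th. 2*pi * sqrt ((sin th)\<^sup>2 + (m + cos th)\<^sup>2)))"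
    using pi_ellipse_length_eq_integral[of m] by (simp add: k mult_ac)
  also have "\<dots> = (\<integral>\<^sup>+th. indicator {0<..<pi} th * ennreal (2*pi * sqrt ((sin th)\<^sup>2 + (m + cos th)\<^sup>2)) \<partial>lborel)"
    by (rule nn_integral_indicator_eq_integral[symmetric]) (auto intro!: continuous_intros)
  also have "\<dots> \<le> vol_vf v"
    using vol_vf_ge by (simp add: m_def)
  finally show ?thesis .
qed

end
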